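(* Let $\alpha>1$. For all $a,b>0$, \[\sup_{x\ge1}\left|x\left(F_\alpha(\tfrac xa)-F_\alpha(\tfrac xb)\right)\right|\le|a-b|\,G_\alpha,\qquad \sup_{x\ge1}\left|x\left(D_xF_\alpha(\tfrac xa)-D_xF_\alpha(\tfrac xb)\right)\right|\le|a-b|\,L_\alpha.\]
   Context: $F_\alpha(x)=\frac{\sin(\frac{2\pi}{1+\alpha})}{\pi}\int_0^x\frac{dy}{1+y^2-2y\cos(\frac{2\pi}{1+\alpha})}$, $K_\alpha(x)=xF_\alpha'(x)=\frac{\sin(\frac{2\pi}{1+\alpha})}\pi\frac{x}{1+x^2-2x\cos(\frac{2\pi}{1+\alpha})}$, $D_x=x\frac d{dx}$. $G_\alpha=\sup_{x\ge0}|F_\alpha'(x)|$ (equal to $\frac1\pi\sin\frac{2\pi}{1+\alpha}$ for $1<\alpha\le3$ and $\frac{1}{\pi\sin\frac{2\pi}{1+\alpha}}$ for $\alpha>3$), and $L_\alpha=\sup_{x\ge0}|K_\alpha'(x)|$. *)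

theory Defs
  imports "HOL-Analysis.Analysis"
begin

definition theta :: "real \<Rightarrow> real" where
  "theta \<alpha> = 2 * pi / (1 + \<alpha>)"

definition Fd :: "real \<Rightarrow> real \<Rightarrow> real" where
  "Fd \<alpha> y = sin (theta \<alpha>) / pi * (1 / (1 + y\<^sup>2 - 2 * y * cos (theta \<alpha>)))"

definition F :: "real \<Rightarrow> real \<Rightarrow> real" where
  "F \<alpha> x = integral {0..x} (\<lambda>y. Fd \<alpha> y)"

definition K :: "real \<Rightarrow> real \<Rightarrow> real" where
  "K \<alpha> x = sin (theta \<alpha>) / pi * (x / (1 + x\<^sup>2 - 2 * x * cos (theta \<alpha>)))"

definition G :: "real \<Rightarrow> real" where
  "G \<alpha> = (SUP x\<in>{0..}. \<bar>Fd \<alpha> x\<bar>)"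

definition L :: "real \<Rightarrow> real" where
  "L \<alpha> = (SUP x\<in>{0..}. \<bar>deriv (K \<alpha>) x\<bar>)"

end

theory Submission
  imports Defs
begin

text \<open>
  Both estimates rest on the inversion symmetries \<open>K(1/t) = K(t)\<close> and \<open>F'(1/t) = t\<^sup>2 F'(t)\<close>.
  By the chain rule they give \<open>d/ds (x F(x/s)) = -F'(s/x)\<close> and \<open>d/ds (x K(x/s)) = K'(s/x)\<close>,
  so for fixed \<open>x\<close> the mean value theorem in \<open>s\<close> on \<open>(0, \<infinity>)\<close> bounds both differences by
  \<open>|a - b|\<close> times \<open>sup |F'|\<close> resp. \<open>sup |K'|\<close>. These suprema are finite because the
  denominator \<open>1 + y\<^sup>2 - 2 y cos \<theta>\<close> is at least \<open>sin\<^sup>2 \<theta>\<close> and at least \<open>(1 + y\<^sup>2)(1 - |cos \<theta>|)\<close>.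
\<close>

lemma sin_theta_pos:
  assumes "\<alpha> > 1"
  shows "0 < sin (theta \<alpha>)"
proof (rule sin_gt_zero)
  show "0 < theta \<alpha>" "theta \<alpha> < pi"
    using assms by (auto simp: theta_def field_simps)
qed

lemma abs_cos_theta_less_1:
  assumes "\<alpha> > 1"
  shows "\<bar>cos (theta \<alpha>)\<bar> < 1"
proof -
  have "(cos (theta \<alpha>))\<^sup>2 < 1"
    using sin_theta_pos[OF assms] sin_squared_eq[of "theta \<alpha>"] by (smt (verit) zero_less_power)
  then show ?thesis by (simp add: abs_square_less_1)
qed

lemma one_minus_sq_le_quadratic:
  fixes c y :: real
  shows "1 - c\<^sup>2 \<le> 1 + y\<^sup>2 - 2 * y * c"
  using zero_le_power2[of "y - c"] by (simp add: power2_diff)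

lemma one_plus_sq_mult_le_quadratic:
  fixes c y :: real
  shows "(1 + y\<^sup>2) * (1 - \<bar>c\<bar>) \<le> 1 + y\<^sup>2 - 2 * y * c"
proof -
  have "\<bar>2 * y\<bar> \<le> 1 + y\<^sup>2"
    using zero_le_power2[of "\<bar>y\<bar> - 1"] by (simp add: power2_diff)
  then have "\<bar>2 * y * c\<bar> \<le> (1 + y\<^sup>2) * \<bar>c\<bar>"
    by (simp add: abs_mult mult_right_mono)
  then show ?thesis by (simp add: algebra_simps)
qed

lemma sin_theta_sq_le_theta_den:
  "(sin (theta \<alpha>))\<^sup>2 \<le> 1 + y\<^sup>2 - 2 * y * cos (theta \<alpha>)"
  by (simp add: sin_squared_eq one_minus_sq_le_quadratic)

lemma theta_den_pos:
  assumes "\<alpha> > 1"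
  shows "0 < 1 + y\<^sup>2 - 2 * y * cos (theta \<alpha>)"
  using sin_theta_sq_le_theta_den[of \<alpha> y] sin_theta_pos[OF assms] by (smt (verit) zero_less_power)

lemma Fd_inverse:
  assumes "t \<noteq> 0"
  shows "Fd \<alpha> (1 / t) = t\<^sup>2 * Fd \<alpha> t"
proof -
  have "1 + (1 / t)\<^sup>2 - 2 * (1 / t) * cos (theta \<alpha>) = (1 + t\<^sup>2 - 2 * t * cos (theta \<alpha>)) / t\<^sup>2"
    using assms by (simp add: field_simps power2_eq_square)
  then show ?thesis by (simp add: Fd_def)
qed

lemma K_inverse: "K \<alpha> (1 / t) = K \<alpha> t"
proof (cases "t = 0")
  case False
  have "1 + (1 / t)\<^sup>2 - 2 * (1 / t) * cos (theta \<alpha>) = (1 + t\<^sup>2 - 2 * t * cos (theta \<alpha>)) / t\<^sup>2"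
    using False by (simp add: field_simps power2_eq_square)
  then show ?thesis using False by (simp add: K_def power2_eq_square)
qed (simp add: K_def)

lemma abs_Fd_le:
  assumes "\<alpha> > 1"
  shows "\<bar>Fd \<alpha> y\<bar> \<le> 1 / (pi * sin (theta \<alpha>))"
proof -
  let ?s = "sin (theta \<alpha>)" and ?D = "1 + y\<^sup>2 - 2 * y * cos (theta \<alpha>)"
  have s: "0 < ?s" using sin_theta_pos[OF assms] .
  have "\<bar>Fd \<alpha> y\<bar> = ?s / pi * (1 / ?D)"
    using s theta_den_pos[OF assms, of y] by (simp add: Fd_def abs_mult)
  also have "\<dots> \<le> ?s / pi * (1 / ?s\<^sup>2)"
    using s sin_theta_sq_le_theta_den[of \<alpha> y] theta_den_pos[OF assms, of y]
    by (intro mult_left_mono divide_left_mono) auto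
  also have "\<dots> = 1 / (pi * ?s)"
    using s by (simp add: power2_eq_square)
  finally show ?thesis .
qed

lemma abs_Fd_le_G:
  assumes "\<alpha> > 1" "y \<ge> 0"
  shows "\<bar>Fd \<alpha> y\<bar> \<le> G \<alpha>"
  unfolding G_def
  using assms abs_Fd_le[OF assms(1)] by (intro cSUP_upper bdd_aboveI2) auto

lemma F_has_real_derivative:
  assumes "\<alpha> > 1" "u > 0"
  shows "(F \<alpha> has_real_derivative Fd \<alpha> u) (at u)"
proof -
  have "continuous_on {0..u+1} (Fd \<alpha>)"
    unfolding Fd_def using theta_den_pos[OF assms(1)]
    by (intro continuous_intros) (auto simp: less_imp_neq[symmetric])
  then have "(F \<alpha> has_real_derivative Fd \<alpha> u) (at u within {0..u+1})"
    unfolding F_def[abs_def] using assms(2) by (intro integral_has_real_derivative) auto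
  moreover have "at u within {0..u+1} = at u"
    using assms(2) by (intro at_within_interior) auto
  ultimately show ?thesis by simp
qed

definition Kd :: "real \<Rightarrow> real \<Rightarrow> real" where
  "Kd \<alpha> y = sin (theta \<alpha>) / pi * ((1 - y\<^sup>2) / (1 + y\<^sup>2 - 2 * y * cos (theta \<alpha>))\<^sup>2)"

lemma K_has_real_derivative:
  assumes "\<alpha> > 1"
  shows "(K \<alpha> has_real_derivative Kd \<alpha> y) (at y)"
proof -
  let ?c = "cos (theta \<alpha>)"
  have "1 + y\<^sup>2 - 2 * y * ?c \<noteq> 0" using theta_den_pos[OF assms] by (simp add: less_imp_neq[symmetric])
  then have "((\<lambda>y. y / (1 + y\<^sup>2 - 2 * y * ?c)) has_real_derivative
      (1 - y\<^sup>2) / (1 + y\<^sup>2 - 2 * y * ?c)\<^sup>2) (at y)"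
    by (auto intro!: derivative_eq_intros simp: power2_eq_square algebra_simps)
  then show ?thesis
    unfolding K_def[abs_def] Kd_def by (rule DERIV_cmult)
qed

lemma abs_Kd_le:
  assumes "\<alpha> > 1"
  shows "\<bar>Kd \<alpha> y\<bar> \<le> 1 / (pi * sin (theta \<alpha>) * (1 - \<bar>cos (theta \<alpha>)\<bar>))"
proof -
  let ?s = "sin (theta \<alpha>)" and ?k = "\<bar>cos (theta \<alpha>)\<bar>"
    and ?D = "1 + y\<^sup>2 - 2 * y * cos (theta \<alpha>)"
  have s: "0 < ?s" using sin_theta_pos[OF assms] .
  have k: "?k < 1" using abs_cos_theta_less_1[OF assms] .
  have "?s\<^sup>2 * ((1 + y\<^sup>2) * (1 - ?k)) \<le> ?D * ?D"
    using sin_theta_sq_le_theta_den[of \<alpha> y] one_plus_sq_mult_le_quadratic[of y "cos (theta \<alpha>)"]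
      theta_den_pos[OF assms, of y] k
    by (intro mult_mono) auto
  moreover have "\<bar>1 - y\<^sup>2\<bar> \<le> 1 + y\<^sup>2" using zero_le_power2[of y] by (simp add: abs_le_iff)
  moreover have "0 < ?s\<^sup>2 * ((1 + y\<^sup>2) * (1 - ?k))"
    using s k by (intro mult_pos_pos) (auto simp: add_pos_nonneg)
  ultimately have "\<bar>1 - y\<^sup>2\<bar> / ?D\<^sup>2 \<le> (1 + y\<^sup>2) / (?s\<^sup>2 * ((1 + y\<^sup>2) * (1 - ?k)))"
    by (intro frac_le) (auto simp: power2_eq_square)
  also have "\<dots> = 1 / (?s\<^sup>2 * (1 - ?k))"
    using zero_le_power2[of y] by (simp add: add_nonneg_eq_0_iff)
  finally have frac: "\<bar>1 - y\<^sup>2\<bar> / ?D\<^sup>2 \<le> 1 / (?s\<^sup>2 * (1 - ?k))" .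
  have "\<bar>Kd \<alpha> y\<bar> = ?s / pi * (\<bar>1 - y\<^sup>2\<bar> / ?D\<^sup>2)"
    using s by (simp add: Kd_def abs_mult)
  also have "\<dots> \<le> ?s / pi * (1 / (?s\<^sup>2 * (1 - ?k)))"
    using s frac by (intro mult_left_mono) auto
  also have "\<dots> = 1 / (pi * ?s * (1 - ?k))"
    using s by (simp add: power2_eq_square)
  finally show ?thesis .
qed

lemma abs_Kd_le_L:
  assumes "\<alpha> > 1" "y \<ge> 0"
  shows "\<bar>Kd \<alpha> y\<bar> \<le> L \<alpha>"
proof -
  have deriv_K: "deriv (K \<alpha>) = Kd \<alpha>"
    using K_has_real_derivative[OF assms(1)] DERIV_imp_deriv by blast
  show ?thesis
    unfolding L_def deriv_K using assms abs_Kd_le[OF assms(1)] by (intro cSUP_upper bdd_aboveI2) auto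
qed

lemma F_rescaled_has_real_derivative:
  assumes "\<alpha> > 1" "x > 0" "s > 0"
  shows "((\<lambda>s. x * F \<alpha> (x / s)) has_real_derivative - Fd \<alpha> (s / x)) (at s)"
proof -
  have "((\<lambda>s. x * F \<alpha> (x / s)) has_real_derivative x * (Fd \<alpha> (x / s) * (- x / s\<^sup>2))) (at s)"
    using assms
    by (auto intro!: derivative_eq_intros DERIV_chain2[OF F_has_real_derivative]
        simp: power2_eq_square)
  moreover have "Fd \<alpha> (s / x) = (x / s)\<^sup>2 * Fd \<alpha> (x / s)"
    using Fd_inverse[of "x / s" \<alpha>] assms by simp
  ultimately show ?thesis
    by (simp add: power2_eq_square algebra_simps)
qed

lemma K_rescaled_has_real_derivative:
  assumes "\<alpha> > 1" "x \<noteq> 0"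
  shows "((\<lambda>s. x * K \<alpha> (x / s)) has_real_derivative Kd \<alpha> (s / x)) (at s)"
proof -
  have "(\<lambda>s. x * K \<alpha> (x / s)) = (\<lambda>s. x * K \<alpha> (s / x))"
    using K_inverse[of \<alpha> "s / x" for s] by simp
  moreover have "((\<lambda>s. x * K \<alpha> (s / x)) has_real_derivative x * (Kd \<alpha> (s / x) * (1 / x))) (at s)"
    by (auto intro!: derivative_eq_intros DERIV_chain2[OF K_has_real_derivative[OF assms(1)]])
  ultimately show ?thesis
    using assms(2) by simp
qed

theorem lemma5p4:
  fixes \<alpha> a b :: real
  assumes "\<alpha> > 1" and "a > 0" and "b > 0"
  shows "(\<forall>x\<ge>1. \<bar>x * (F \<alpha> (x / a) - F \<alpha> (x / b))\<bar> \<le> \<bar>a - b\<bar> * G \<alpha>)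
       \<and> (\<forall>x\<ge>1. \<bar>x * (K \<alpha> (x / a) - K \<alpha> (x / b))\<bar> \<le> \<bar>a - b\<bar> * L \<alpha>)"
proof (intro conjI allI impI)
  fix x :: real
  assume "x \<ge> 1"
  then have x: "x > 0" by simp
  have ab: "a \<in> {0<..}" "b \<in> {0<..}"
    using assms by auto
  have "norm (x * F \<alpha> (x / a) - x * F \<alpha> (x / b)) \<le> G \<alpha> * norm (a - b)"
  proof (rule field_differentiable_bound[OF convex_real_interval(3) _ _ ab])
    fix s :: real assume "s \<in> {0<..}"
    then show "((\<lambda>s. x * F \<alpha> (x / s)) has_real_derivative - Fd \<alpha> (s / x)) (at s within {0<..})"
      using assms(1) x by (intro has_field_derivative_at_within[OF F_rescaled_has_real_derivative]) auto
    show "norm (- Fd \<alpha> (s / x)) \<le> G \<alpha>"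
      using abs_Fd_le_G[OF assms(1), of "s / x"] \<open>s \<in> {0<..}\<close> x by simp
  qed
  then show "\<bar>x * (F \<alpha> (x / a) - F \<alpha> (x / b))\<bar> \<le> \<bar>a - b\<bar> * G \<alpha>"
    by (simp add: right_diff_distrib mult.commute)
  have "norm (x * K \<alpha> (x / a) - x * K \<alpha> (x / b)) \<le> L \<alpha> * norm (a - b)"
  proof (rule field_differentiable_bound[OF convex_real_interval(3) _ _ ab])
    fix s :: real assume "s \<in> {0<..}"
    show "((\<lambda>s. x * K \<alpha> (x / s)) has_real_derivative Kd \<alpha> (s / x)) (at s within {0<..})"
      using assms(1) x by (intro has_field_derivative_at_within[OF K_rescaled_has_real_derivative]) auto
    show "norm (Kd \<alpha> (s / x)) \<le> L \<alpha>"
      using abs_Kd_le_L[OF assms(1), of "s / x"] \<open>s \<in> {0<..}\<close> x by simp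
  qed
  then show "\<bar>x * (K \<alpha> (x / a) - K \<alpha> (x / b))\<bar> \<le> \<bar>a - b\<bar> * L \<alpha>"
    by (simp add: right_diff_distrib mult.commute)
qed

end
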